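(* Let $b:\mathbb{D}\to\mathbb{D}$ be analytic with zero sequence $(a_n)_n$ and singular inner factor $S_\nu$, let $\Omega$ be an approach region at $1$ and $m\ge0$ an integer, and assume \[\sup_{z\in\Omega}\ \sum_n\frac{1-|a_n|^2}{|1-\overline{a_n}z|^{2m+2}}+\int_{\mathbb{T}}\frac{d\nu(\zeta)}{|1-\overline{\zeta}z|^{2m+2}}+\int_{\mathbb{T}}\frac{-\log|b(\zeta)|}{|1-\overline{\zeta}z|^{2m+2}}\,dm(\zeta)<\infty.\] If $\overline{\partial_z}^m k^b_z\to\overline{\partial_z}^m k^b_1$ in the norm of $\mathcal{H}(b)$ as $z\to1$ in $\Omega$, then for every $0\le j<m$ we also have $\overline{\partial_z}^j k^b_z\to\overline{\partial_z}^j k^b_1$ in norm as $z\to1$ in $\Omega$.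
   Context: $\mathbb{D}$ unit disk, $\mathbb{T}$ unit circle, $m$ (as measure) normalized Lebesgue measure on $\mathbb{T}$; $S_\nu(z)=\exp(-\int_{\mathbb{T}}\frac{\zeta+z}{\zeta-z}d\nu(\zeta))$. $\mathcal{H}(b)$ is the reproducing kernel Hilbert space with kernel $k^b_z(w)=\frac{1-\overline{b(z)}b(w)}{1-\overline{z}w}$; $\overline{\partial_z}^j k^b_z$ is the $j$-th $\bar z$-derivative of $z\mapsto k^b_z$, with $\langle f,\overline{\partial_z}^j k^b_z\rangle_b=f^{(j)}(z)$. Under the hypothesis, for each $j\le m$, $\overline{\partial_z}^j k^b_z$ converges weakly as $z\to1$ in $\Omega$; its weak limit is denoted $\overline{\partial_z}^j k^b_1$. An approach region at $1$ is an open simply connected $\Omega\subset\mathbb{D}$ with $\partial\Omega\cap\mathbb{T}=\{1\}$ such that for $z\in\Omega$ close to $1$ the segment $[z,1]\subset\Omega$. *)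

theory Defs
  imports "HOL-Complex_Analysis.Complex_Analysis"
begin

abbreviation disk :: "complex set" where "disk \<equiv> ball 0 1"

definition circle_meas :: "complex measure" where
  "circle_meas = distr (density (lebesgue_on {0..<2*pi}) (\<lambda>_. ennreal (1/(2*pi)))) borel (\<lambda>t. cis t)"

definition bdry :: "(complex \<Rightarrow> complex) \<Rightarrow> complex \<Rightarrow> complex" where
  "bdry b \<zeta> = Lim (at_left (1::real)) (\<lambda>r. b (of_real r * \<zeta>))"

definition blaschke_factor :: "complex \<Rightarrow> complex \<Rightarrow> complex" where
  "blaschke_factor \<alpha> z = (if \<alpha> = 0 then z else (of_real (norm \<alpha>) / \<alpha>) * (\<alpha> - z) / (1 - cnj \<alpha> * z))"

text \<open>Blaschke product of the zero sequence a_n, n < N (N = \<infinity> for infinitely many zeros).\<close>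
definition blaschke :: "enat \<Rightarrow> (nat \<Rightarrow> complex) \<Rightarrow> complex \<Rightarrow> complex" where
  "blaschke N a z = prodinf (\<lambda>n. if enat n < N then blaschke_factor (a n) z else 1)"

definition sing_inner :: "complex measure \<Rightarrow> complex \<Rightarrow> complex" where
  "sing_inner \<nu> z = exp (- (\<integral>\<zeta>. (\<zeta> + z) / (\<zeta> - z) \<partial>\<nu>))"

definition outer_part :: "(complex \<Rightarrow> complex) \<Rightarrow> complex \<Rightarrow> complex" where
  "outer_part b z = exp (\<integral>\<zeta>. (\<zeta> + z) / (\<zeta> - z) * of_real (ln (norm (bdry b \<zeta>))) \<partial>circle_meas)"

definition is_zero_seq :: "(complex \<Rightarrow> complex) \<Rightarrow> enat \<Rightarrow> (nat \<Rightarrow> complex) \<Rightarrow> bool" where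
  "is_zero_seq b N a \<longleftrightarrow>
     (\<forall>n. enat n < N \<longrightarrow> a n \<in> disk) \<and>
     (\<forall>w\<in>disk. finite {n. enat n < N \<and> a n = w} \<and>
                 int (card {n. enat n < N \<and> a n = w}) = (if b w = 0 then zorder b w else 0))"

definition is_sing_inner_factor ::
  "(complex \<Rightarrow> complex) \<Rightarrow> enat \<Rightarrow> (nat \<Rightarrow> complex) \<Rightarrow> complex measure \<Rightarrow> bool" where
  "is_sing_inner_factor b N a \<nu> \<longleftrightarrow>
     finite_measure \<nu> \<and> sets \<nu> = sets borel \<and> emeasure \<nu> (- sphere 0 1) = 0 \<and>
     (\<exists>A \<in> sets borel. emeasure \<nu> (- A) = 0 \<and> emeasure circle_meas A = 0) \<and>
     (\<exists>c. norm c = 1 \<and>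
        (\<forall>z\<in>disk. b z = c * blaschke N a z * sing_inner \<nu> z * outer_part b z))"

definition approach_region :: "complex set \<Rightarrow> bool" where
  "approach_region \<Omega> \<longleftrightarrow> open \<Omega> \<and> simply_connected \<Omega> \<and> \<Omega> \<noteq> {} \<and> \<Omega> \<subseteq> disk \<and>
     frontier \<Omega> \<inter> sphere 0 1 = {1} \<and>
     (\<exists>\<delta>>0. \<forall>z\<in>\<Omega>. norm (z - 1) < \<delta> \<longrightarrow> closed_segment z 1 - {1} \<subseteq> \<Omega>)"

text \<open>Reproducing kernel: kb b z w = k^b_z(w).\<close>
definition kb :: "(complex \<Rightarrow> complex) \<Rightarrow> complex \<Rightarrow> complex \<Rightarrow> complex" where
  "kb b z w = (1 - cnj (b z) * b w) / (1 - cnj z * w)"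

text \<open>Norm in H(b) of a function f on the disk (the RKHS norm; \<infinity> iff f is not in H(b)):
  the norm of the (conjugate-linear) functional  sum c_i k_{z_i}  \<mapsto>  <f, sum c_i k_{z_i}>
  on the dense span of kernel functions.\<close>
definition hb_norm :: "(complex \<Rightarrow> complex) \<Rightarrow> (complex \<Rightarrow> complex) \<Rightarrow> ennreal" where
  "hb_norm b f = (SUP p \<in> {(n::nat, c::nat\<Rightarrow>complex, z::nat\<Rightarrow>complex). (\<forall>i<n. z i \<in> disk) \<and>
        Re (\<Sum>i<n. \<Sum>j<n. c i * cnj (c j) * kb b (z i) (z j)) \<le> 1}.
      (case p of (n, c, z) \<Rightarrow> ennreal (norm (\<Sum>i<n. cnj (c i) * f (z i)))))"

text \<open>The j-th conj(z)-derivative of z \<mapsto> k^b_z, evaluated at w.\<close>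
definition dk :: "(complex \<Rightarrow> complex) \<Rightarrow> nat \<Rightarrow> complex \<Rightarrow> complex \<Rightarrow> complex" where
  "dk b j z w = cnj ((deriv ^^ j) (\<lambda>\<zeta>. (1 - b \<zeta> * cnj (b w)) / (1 - \<zeta> * cnj w)) z)"

text \<open>The weak limit of dk b j z as z \<rightarrow> 1 in \<Omega>; a weak limit in an RKHS is the pointwise limit.\<close>
definition dk1 :: "(complex \<Rightarrow> complex) \<Rightarrow> complex set \<Rightarrow> nat \<Rightarrow> complex \<Rightarrow> complex" where
  "dk1 b \<Omega> j w = Lim (at 1 within \<Omega>) (\<lambda>z. dk b j z w)"

end

(*
  Norm convergence at order m gives pointwise convergence, for every w in the disk, of the m-th
  z-derivatives of the kernels k^b_w. By the Leibniz rule such a derivative is, up to an explicit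
  rational term, cnj (b w) (1 - cnj w z)^(-m-1) times the value at cnj w of a polynomial of degree
  m whose coefficients are, up to a unitriangular change of basis, b(z), b'(z), ..., b^(m)(z).
  Lagrange interpolation at m+1 points where b does not vanish therefore shows that b, ..., b^(m)
  converge as z -> 1 within the region, hence so do the kernel derivatives of every order j <= m,
  and their pointwise limits are the weak limits.

  From order j+1 to order j: norm convergence at order j+1 bounds the H(b)-norms of the (j+1)-st
  kernel derivatives near 1, and integrating along the segment [z, 1), which lies in the approach
  region, bounds the H(b)-distance of the j-th kernel derivative at z from its limit by B |z - 1|.
*)
theory Submission
  imports Defs "HOL-Computational_Algebra.Polynomial"
begin

section \<open>The norm of \<open>H(b)\<close> as a supremum over kernel combinations\<close>

definition unit_kernel_comb :: "(complex \<Rightarrow> complex) \<Rightarrow> nat \<Rightarrow> (nat \<Rightarrow> complex) \<Rightarrow> (nat \<Rightarrow> complex) \<Rightarrow> bool" where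
  "unit_kernel_comb b n c z \<longleftrightarrow>
     (\<forall>i<n. z i \<in> disk) \<and> Re (\<Sum>i<n. \<Sum>j<n. c i * cnj (c j) * kb b (z i) (z j)) \<le> 1"

definition kernel_pairing :: "nat \<Rightarrow> (nat \<Rightarrow> complex) \<Rightarrow> (nat \<Rightarrow> complex) \<Rightarrow> (complex \<Rightarrow> complex) \<Rightarrow> complex" where
  "kernel_pairing n c z f = (\<Sum>i<n. cnj (c i) * f (z i))"

lemma hb_norm_eq_SUP:
  "hb_norm b f = (SUP p \<in> {(n, c, z). unit_kernel_comb b n c z}.
     (case p of (n, c, z) \<Rightarrow> ennreal (norm (kernel_pairing n c z f))))"
  unfolding hb_norm_def unit_kernel_comb_def kernel_pairing_def by simp

lemma hb_norm_ge_kernel_pairing: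
  "unit_kernel_comb b n c z \<Longrightarrow> ennreal (norm (kernel_pairing n c z f)) \<le> hb_norm b f"
  unfolding hb_norm_eq_SUP by (rule SUP_upper2[of "(n, c, z)"]) auto

lemma hb_norm_le_ennrealI:
  "(\<And>n c z. unit_kernel_comb b n c z \<Longrightarrow> norm (kernel_pairing n c z f) \<le> C) \<Longrightarrow> hb_norm b f \<le> ennreal C"
  unfolding hb_norm_eq_SUP by (rule SUP_least) (auto intro: ennreal_leI)

lemma kernel_pairing_add: "kernel_pairing n c z (\<lambda>w. f w + g w) = kernel_pairing n c z f + kernel_pairing n c z g"
  unfolding kernel_pairing_def by (simp add: algebra_simps sum.distrib)

lemma kernel_pairing_diff: "kernel_pairing n c z (\<lambda>w. f w - g w) = kernel_pairing n c z f - kernel_pairing n c z g"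
  unfolding kernel_pairing_def by (simp add: algebra_simps sum_subtractf)

lemma hb_norm_add_le: "hb_norm b (\<lambda>w. f w + g w) \<le> hb_norm b f + hb_norm b g"
  unfolding hb_norm_eq_SUP[of b "\<lambda>w. f w + g w"]
proof (rule SUP_least, clarify)
  fix n c z assume comb: "unit_kernel_comb b n c z"
  have "ennreal (norm (kernel_pairing n c z (\<lambda>w. f w + g w)))
      \<le> ennreal (norm (kernel_pairing n c z f)) + ennreal (norm (kernel_pairing n c z g))"
    unfolding kernel_pairing_add ennreal_plus[OF norm_ge_zero norm_ge_zero, symmetric]
    by (intro ennreal_leI norm_triangle_ineq)
  also have "\<dots> \<le> hb_norm b f + hb_norm b g"
    using comb by (intro add_mono hb_norm_ge_kernel_pairing)
  finally show "ennreal (norm (kernel_pairing n c z (\<lambda>w. f w + g w))) \<le> hb_norm b f + hb_norm b g" .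
qed

lemma hb_norm_le_diff_add: "hb_norm b f \<le> hb_norm b (\<lambda>w. f w - g w) + hb_norm b g"
  using hb_norm_add_le[of b "\<lambda>w. f w - g w" g] by simp

lemma hb_norm_diff_commute: "hb_norm b (\<lambda>w. f w - g w) = hb_norm b (\<lambda>w. g w - f w)"
  unfolding hb_norm_eq_SUP kernel_pairing_diff by (simp add: norm_minus_commute)

lemma hb_norm_eventually_bounded:
  assumes "F \<noteq> bot"
    and lim: "((\<lambda>z. hb_norm b (\<lambda>w. D z w - D1 w)) \<longlongrightarrow> 0) F"
    and finite_norm: "eventually (\<lambda>z. hb_norm b (D z) < \<infinity>) F"
  shows "\<exists>B\<ge>0. eventually (\<lambda>z. hb_norm b (D z) \<le> ennreal B) F"
proof -
  have close: "eventually (\<lambda>z. hb_norm b (\<lambda>w. D z w - D1 w) < 1) F"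
    using lim by (rule order_tendstoD) simp
  obtain z0 where z0: "hb_norm b (\<lambda>w. D z0 w - D1 w) < 1" "hb_norm b (D z0) < \<infinity>"
    using eventually_happens'[OF \<open>F \<noteq> bot\<close> eventually_conj[OF close finite_norm]] by blast
  have "hb_norm b D1 \<le> hb_norm b (\<lambda>w. D z0 w - D1 w) + hb_norm b (D z0)"
    using hb_norm_le_diff_add[of b D1 "D z0"] by (simp add: hb_norm_diff_commute)
  also have "\<dots> < \<infinity>" using z0 by (simp add: ennreal_add_less_top order.strict_trans)
  finally have D1: "1 + hb_norm b D1 < \<infinity>" by simp
  show ?thesis
  proof (intro exI conjI)
    show "eventually (\<lambda>z. hb_norm b (D z) \<le> ennreal (enn2real (1 + hb_norm b D1))) F"
      using close
    proof eventually_elim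
      case (elim z)
      have "hb_norm b (D z) \<le> hb_norm b (\<lambda>w. D z w - D1 w) + hb_norm b D1" by (rule hb_norm_le_diff_add)
      also have "\<dots> \<le> 1 + hb_norm b D1" using elim by (intro add_mono) auto
      finally show ?case using D1 by simp
    qed
  qed simp
qed

section \<open>Kernels on the disk\<close>

lemma of_real_minus_cnj_mult_neq_zero:
  "norm p * norm q < c \<Longrightarrow> of_real c - cnj p * q \<noteq> 0"
proof
  assume "norm p * norm q < c" "of_real c - cnj p * q = 0"
  then have "norm (of_real c :: complex) < c" by (simp add: norm_mult)
  then show False by simp
qed

lemma one_minus_cnj_mult_neq_zero:
  assumes "norm p < 1" "norm q \<le> 1"
  shows "1 - cnj p * q \<noteq> 0"
proof -
  have "norm p * norm q \<le> norm p" using mult_left_le[of "norm q" "norm p"] assms by simp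
  then show ?thesis using assms(1) of_real_minus_cnj_mult_neq_zero[of p q 1] by simp
qed

definition szego_kernel :: "real \<Rightarrow> complex \<Rightarrow> complex \<Rightarrow> complex" where
  "szego_kernel r p q = of_real (r\<^sup>2) / (of_real (r\<^sup>2) - cnj p * q)"

lemma norm_circlepath_0: "0 \<le> r \<Longrightarrow> norm (circlepath 0 r t) = r"
  by (simp add: circlepath norm_mult norm_exp_eq_Re)

lemma szego_kernel_denom_neq_zero:
  assumes "norm p < r" "norm u \<le> r"
  shows "of_real (r\<^sup>2) - cnj p * u \<noteq> 0"
proof (rule of_real_minus_cnj_mult_neq_zero)
  have "norm p * norm u \<le> norm p * r" using assms(2) by (intro mult_left_mono) auto
  also have "\<dots> < r * r"
    by (intro mult_strict_right_mono) (use assms(1) norm_ge_zero[of p] in linarith)+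
  finally show "norm p * norm u < r\<^sup>2" by (simp add: power2_eq_square)
qed

lemma szego_kernel_holomorphic: "norm p < r \<Longrightarrow> szego_kernel r p holomorphic_on cball 0 r"
  unfolding szego_kernel_def[abs_def] using szego_kernel_denom_neq_zero
  by (intro holomorphic_intros) auto

lemma szego_kernel_circlepath:
  assumes "norm p < r"
  shows "szego_kernel r p (circlepath 0 r t) = cnj (circlepath 0 r t / (circlepath 0 r t - p))"
proof -
  let ?g = "circlepath 0 r t"
  have r: "0 < r" using assms norm_ge_zero[of p] by linarith
  have ng: "norm ?g = r" using r norm_circlepath_0[of r t] by simp
  have g0: "?g \<noteq> 0" using ng assms by auto
  have cg: "cnj ?g = of_real (r\<^sup>2) / ?g"
    using g0 ng complex_norm_square[of ?g] by (simp add: field_simps mult.commute)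
  have "of_real (r\<^sup>2) - cnj p * ?g \<noteq> 0"
    using assms ng by (intro szego_kernel_denom_neq_zero) auto
  then show ?thesis
    unfolding szego_kernel_def using g0 by (simp add: cg field_simps)
qed

lemma Cauchy_integral_szego_kernel:
  assumes hol: "f holomorphic_on cball 0 r" and p: "norm p < r"
  shows "((\<lambda>t. f (circlepath 0 r t) * cnj (szego_kernel r p (circlepath 0 r t))) has_integral f p) {0..1}"
proof -
  let ?g = "circlepath 0 r"
  have "((\<lambda>u. f u / (u - p)) has_contour_integral (2 * of_real pi * \<i> * f p)) ?g"
    using Cauchy_integral_circlepath[of 0 r f p] hol p
    by (simp add: holomorphic_on_imp_continuous_on holomorphic_on_subset[OF hol ball_subset_cball])
  then have "((\<lambda>t. f (?g t) / (?g t - p) * (2 * of_real pi * \<i> * ?g t)) has_integral (2 * of_real pi * \<i> * f p)) {0..1}"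
    unfolding has_contour_integral
    by (rule has_integral_eq[rotated]) (simp add: vector_derivative_circlepath, simp add: circlepath)
  then have "((\<lambda>t. f (?g t) / (?g t - p) * (2 * of_real pi * \<i> * ?g t) / (2 * of_real pi * \<i>))
      has_integral (2 * of_real pi * \<i> * f p) / (2 * of_real pi * \<i>)) {0..1}"
    by (rule has_integral_divide)
  then show ?thesis
    using p by (simp add: szego_kernel_circlepath)
qed

lemma szego_kernel_reproducing:
  fixes n :: nat
  assumes hol: "f holomorphic_on cball 0 r" and p: "\<forall>i<n. norm (p i) < r"
  shows "((\<lambda>t. f (circlepath 0 r t) * cnj (\<Sum>i<n. v i * szego_kernel r (p i) (circlepath 0 r t)))
           has_integral (\<Sum>i<n. cnj (v i) * f (p i))) {0..1}"
proof -
  have "((\<lambda>t. \<Sum>i<n. cnj (v i) * (f (circlepath 0 r t) * cnj (szego_kernel r (p i) (circlepath 0 r t))))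
      has_integral (\<Sum>i<n. cnj (v i) * f (p i))) {0..1}"
    by (rule has_integral_sum) (use p in \<open>auto intro!: has_integral_mult_right Cauchy_integral_szego_kernel hol\<close>)
  then show ?thesis
    by (rule has_integral_eq[rotated]) (simp add: sum_distrib_left mult_ac)
qed

lemma Re_mult_cnj_le_half_sum:
  fixes \<beta> A B :: complex
  assumes "norm \<beta> \<le> 1"
  shows "Re (\<beta> * B * cnj A) \<le> (Re (B * cnj B) + Re (A * cnj A)) / 2"
proof -
  have "Re (\<beta> * B * cnj A) \<le> norm \<beta> * (norm B * norm A)"
    using complex_Re_le_cmod[of "\<beta> * B * cnj A"] by (simp add: norm_mult)
  also have "\<dots> \<le> norm B * norm A"
    using assms by (intro mult_left_le_one_le) auto
  also have "\<dots> \<le> ((norm B)\<^sup>2 + (norm A)\<^sup>2) / 2"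
    using sum_squares_bound[of "norm B" "norm A"] by (simp add: power2_eq_square field_simps)
  also have "\<dots> = (Re (B * cnj B) + Re (A * cnj A)) / 2"
    by (simp add: complex_mult_cnj cmod_power2)
  finally show ?thesis .
qed

lemma kb_diag: "kb b z z = of_real ((1 - (norm (b z))\<^sup>2) / (1 - (norm z)\<^sup>2))"
  unfolding kb_def of_real_divide of_real_diff of_real_1 complex_norm_square by (simp add: mult.commute)

lemma kb_commute: "kb b w z = cnj (kb b z w)"
  unfolding kb_def by (simp add: mult.commute)

definition kernel_comb :: "(complex \<Rightarrow> complex) \<Rightarrow> nat \<Rightarrow> (nat \<Rightarrow> complex) \<Rightarrow> (nat \<Rightarrow> complex) \<Rightarrow> complex \<Rightarrow> complex" where
  "kernel_comb b n c z \<zeta> = (\<Sum>i<n. c i * kb b (z i) \<zeta>)"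

lemma higher_deriv_sum:
  fixes f :: "'i \<Rightarrow> complex \<Rightarrow> complex"
  assumes "finite I" "\<And>i. i \<in> I \<Longrightarrow> f i holomorphic_on S" "open S" "z \<in> S"
  shows "(deriv ^^ j) (\<lambda>w. \<Sum>i\<in>I. f i w) z = (\<Sum>i\<in>I. (deriv ^^ j) (f i) z)"
  using assms(1,2)
proof (induction I rule: finite_induct)
  case (insert a I)
  have "(deriv ^^ j) (\<lambda>w. f a w + (\<Sum>i\<in>I. f i w)) z = (deriv ^^ j) (f a) z + (deriv ^^ j) (\<lambda>w. \<Sum>i\<in>I. f i w) z"
    using insert.prems assms(3,4) by (intro higher_deriv_add holomorphic_on_sum) auto
  with insert show ?case by simp
qed simp

definition recip_linear_deriv :: "complex \<Rightarrow> nat \<Rightarrow> complex \<Rightarrow> complex" where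
  "recip_linear_deriv x k z = fact k * x ^ k / (1 - x * z) ^ Suc k"

lemma recip_linear_deriv_has_field_derivative:
  assumes "1 - x * z \<noteq> 0"
  shows "(recip_linear_deriv x k has_field_derivative recip_linear_deriv x (Suc k) z) (at z)"
  unfolding recip_linear_deriv_def[abs_def]
  by (rule derivative_eq_intros refl | use assms in simp)+

lemma higher_deriv_recip_linear:
  "1 - x * z \<noteq> 0 \<Longrightarrow> (deriv ^^ k) (\<lambda>\<zeta>. 1 / (1 - x * \<zeta>)) z = recip_linear_deriv x k z"
proof (induction k arbitrary: z)
  case 0
  then show ?case by (simp add: recip_linear_deriv_def)
next
  case (Suc k)
  have "open {\<zeta>. 1 - x * \<zeta> \<noteq> 0}" by (intro open_Collect_neq continuous_intros)
  then have "eventually (\<lambda>\<zeta>. 1 - x * \<zeta> \<noteq> 0) (nhds z)"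
    using Suc.prems eventually_nhds_in_open by fastforce
  then have "deriv ((deriv ^^ k) (\<lambda>\<zeta>. 1 / (1 - x * \<zeta>))) z = deriv (recip_linear_deriv x k) z"
    by (intro deriv_cong_ev) (auto elim!: eventually_mono intro: Suc.IH)
  also have "\<dots> = recip_linear_deriv x (Suc k) z"
    by (rule DERIV_imp_deriv[OF recip_linear_deriv_has_field_derivative[OF Suc.prems]])
  finally show ?case by simp
qed

lemma dk_eq_cnj_higher_deriv_kb: "dk b j z w = cnj ((deriv ^^ j) (kb b w) z)"
proof -
  have "(\<lambda>\<zeta>. (1 - b \<zeta> * cnj (b w)) / (1 - \<zeta> * cnj w)) = kb b w"
    unfolding kb_def by (simp add: fun_eq_iff mult.commute)
  then show ?thesis unfolding dk_def by simp
qed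

section \<open>Interpolation\<close>

definition lagrange_basis :: "'a::field set \<Rightarrow> 'a \<Rightarrow> 'a poly" where
  "lagrange_basis X x = smult (1 / (\<Prod>y\<in>X - {x}. x - y)) (\<Prod>y\<in>X - {x}. [:- y, 1:])"

lemma poly_lagrange_basis:
  assumes "finite X" "x \<in> X" "y \<in> X"
  shows "poly (lagrange_basis X x) y = (if y = x then 1 else 0)"
proof (cases "y = x")
  case True
  have "(\<Prod>y\<in>X - {x}. x - y) \<noteq> 0" using assms(1) by simp
  then show ?thesis using True by (simp add: lagrange_basis_def poly_prod)
next
  case False
  then have "(\<Prod>z\<in>X - {x}. y - z) = 0" using assms by (intro prod_zero) auto
  then show ?thesis using False by (simp add: lagrange_basis_def poly_prod)
qed

lemma degree_lagrange_basis:
  assumes "finite X" "x \<in> X"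
  shows "degree (lagrange_basis X x) < card X"
proof -
  have "degree (lagrange_basis X x) \<le> degree (\<Prod>y\<in>X - {x}. [:- y, 1:])"
    unfolding lagrange_basis_def by (rule degree_smult_le)
  also have "\<dots> \<le> (\<Sum>y\<in>X - {x}. degree [:- y, 1:])"
    using assms(1) degree_prod_sum_le[of "X - {x}" "\<lambda>y. [:- y, 1:]"] by (simp add: o_def)
  also have "\<dots> = card (X - {x})" by simp
  also have "\<dots> < card X" using assms by (rule card_Diff1_less)
  finally show ?thesis .
qed

lemma lagrange_interpolation:
  fixes p :: "'a::field poly"
  assumes "finite X" "degree p < card X"
  shows "p = (\<Sum>x\<in>X. smult (poly p x) (lagrange_basis X x))"
proof (rule poly_eqI_degree[of X])
  show "poly p y = poly (\<Sum>x\<in>X. smult (poly p x) (lagrange_basis X x)) y" if "y \<in> X" for y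
    using assms(1) that by (simp add: poly_sum poly_lagrange_basis if_distrib sum.delta' cong: if_cong)
  show "degree (\<Sum>x\<in>X. smult (poly p x) (lagrange_basis X x)) < card X"
  proof -
    have "degree (lagrange_basis X x) \<le> card X - 1" if "x \<in> X" for x
      using degree_lagrange_basis[OF assms(1) that] by linarith
    then have "degree (\<Sum>x\<in>X. smult (poly p x) (lagrange_basis X x)) \<le> card X - 1"
      using assms(1) by (intro degree_sum_le order.trans[OF degree_smult_le]) auto
    then show ?thesis using assms(2) by linarith
  qed
qed (use assms in auto)

lemma tendsto_coeff_of_tendsto_poly:
  fixes P :: "'b \<Rightarrow> 'a::real_normed_field poly"
  assumes X: "finite X" and deg: "\<And>z. degree (P z) < card X"
    and lim: "\<And>x. x \<in> X \<Longrightarrow> ((\<lambda>z. poly (P z) x) \<longlongrightarrow> V x) F"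
  shows "((\<lambda>z. coeff (P z) l) \<longlongrightarrow> (\<Sum>x\<in>X. V x * coeff (lagrange_basis X x) l)) F"
proof -
  have "coeff (P z) l = (\<Sum>x\<in>X. poly (P z) x * coeff (lagrange_basis X x) l)" for z
    using arg_cong[OF lagrange_interpolation[OF X deg], of "\<lambda>p. coeff p l"] by (simp add: coeff_sum)
  then show ?thesis using lim by (simp add: tendsto_sum tendsto_mult_right)
qed

lemma unitriangular_tendsto:
  fixes e :: "nat \<Rightarrow> 'b \<Rightarrow> 'a::real_normed_field"
  assumes c: "\<And>l. l \<le> n \<Longrightarrow> \<exists>L. ((\<lambda>z. c l z) \<longlongrightarrow> L) F"
    and \<omega>: "\<And>k l. k < l \<Longrightarrow> l \<le> n \<Longrightarrow> \<exists>L. ((\<lambda>z. \<omega> k l z) \<longlongrightarrow> L) F"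
    and eq: "\<And>l z. l \<le> n \<Longrightarrow> c l z = e l z + (\<Sum>k<l. e k z * \<omega> k l z)"
  shows "l \<le> n \<Longrightarrow> \<exists>L. ((\<lambda>z. e l z) \<longlongrightarrow> L) F"
proof (induction l rule: less_induct)
  case (less l)
  have "\<exists>L. ((\<lambda>z. e k z * \<omega> k l z) \<longlongrightarrow> L) F" if "k < l" for k
    using less.IH[of k] \<omega>[of k l] that less.prems by (auto intro: tendsto_mult)
  then obtain L where "\<forall>k<l. ((\<lambda>z. e k z * \<omega> k l z) \<longlongrightarrow> L k) F" by metis
  then have "((\<lambda>z. \<Sum>k<l. e k z * \<omega> k l z) \<longlongrightarrow> (\<Sum>k<l. L k)) F" by (intro tendsto_sum) auto
  moreover obtain Lc where "((\<lambda>z. c l z) \<longlongrightarrow> Lc) F" using c less.prems by blast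
  ultimately have "((\<lambda>z. c l z - (\<Sum>k<l. e k z * \<omega> k l z)) \<longlongrightarrow> Lc - (\<Sum>k<l. L k)) F"
    by (intro tendsto_diff)
  then show ?case by (auto simp: eq[OF less.prems])
qed

lemma coeff_linear_power_eq: "coeff ([:1, a:] ^ n) i = of_nat (n choose i) * a ^ i"
proof (cases "i \<le> n")
  case False
  have "degree ([:1, a:] ^ n) \<le> n" using degree_power_le[of "[:1, a:]" n] by (cases "a = 0") auto
  then show ?thesis using False by (simp add: coeff_eq_0 binomial_eq_0)
qed (simp add: coeff_linear_poly_power)

lemma coeff_sum_monom_mult_linear_power:
  fixes e :: "nat \<Rightarrow> 'a::comm_ring_1"
  assumes "l \<le> m"
  shows "coeff (\<Sum>k\<le>m. smult (e k) (monom 1 k * [:1, a:] ^ (m - k))) l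
         = e l + (\<Sum>k<l. e k * (of_nat ((m - k) choose (l - k)) * a ^ (l - k)))"
proof -
  have "coeff (\<Sum>k\<le>m. smult (e k) (monom 1 k * [:1, a:] ^ (m - k))) l
      = (\<Sum>k\<le>m. if k \<le> l then e k * (of_nat ((m - k) choose (l - k)) * a ^ (l - k)) else 0)"
    unfolding coeff_sum by (intro sum.cong) (auto simp: coeff_monom_mult coeff_linear_power_eq)
  also have "\<dots> = (\<Sum>k\<le>l. e k * (of_nat ((m - k) choose (l - k)) * a ^ (l - k)))"
    using assms by (intro sum.mono_neutral_cong_right) auto
  also have "\<dots> = e l + (\<Sum>k<l. e k * (of_nat ((m - k) choose (l - k)) * a ^ (l - k)))"
    by (simp add: lessThan_Suc_atMost[symmetric])
  finally show ?thesis .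
qed

definition kb_interpolant :: "(complex \<Rightarrow> complex) \<Rightarrow> nat \<Rightarrow> complex \<Rightarrow> complex poly" where
  "kb_interpolant b m z =
     (\<Sum>k\<le>m. smult (of_nat (m choose k) * fact k * (deriv ^^ (m - k)) b z) (monom 1 k * [:1, - z:] ^ (m - k)))"

lemma degree_kb_interpolant: "degree (kb_interpolant b m z) \<le> m"
proof -
  have "degree (monom (1::complex) k * [:1, - z:] ^ (m - k)) \<le> m" if "k \<le> m" for k
  proof -
    have "degree (monom (1::complex) k * [:1, - z:] ^ (m - k)) \<le> k + degree [:1, - z:] * (m - k)"
      by (intro order.trans[OF degree_mult_le] add_mono degree_monom_le degree_power_le)
    also have "\<dots> \<le> m" using that by (cases "z = 0") auto
    finally show ?thesis .
  qed
  then show ?thesis unfolding kb_interpolant_def by (intro degree_sum_le order.trans[OF degree_smult_le]) auto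
qed

section \<open>Approach regions\<close>

lemma approach_region_subset_disk: "approach_region \<Omega> \<Longrightarrow> \<Omega> \<subseteq> disk"
  by (simp add: approach_region_def)

lemma approach_region_islimpt:
  assumes "approach_region \<Omega>"
  shows "1 islimpt \<Omega>"
proof -
  have "1 \<in> closure \<Omega>" using assms by (auto simp: approach_region_def frontier_def)
  moreover have "1 \<notin> \<Omega>" using approach_region_subset_disk[OF assms] by auto
  ultimately show ?thesis by (simp add: closure_def)
qed

lemma eventually_at_within_in_superset: "S \<subseteq> T \<Longrightarrow> eventually (\<lambda>z. z \<in> T) (at x within S)"
  by (auto simp: eventually_at_filter intro!: always_eventually)

lemma closed_segment_shrink_subset:
  fixes z a :: complex
  assumes "z \<noteq> a" "0 \<le> t" "t < 1"
  shows "closed_segment z (z + of_real t * (a - z)) \<subseteq> closed_segment z a - {a}"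
proof -
  let ?g = "z + of_real t * (a - z)"
  have "?g \<in> closed_segment z a"
    unfolding in_segment using assms by (intro exI[of _ t]) (simp add: scaleR_conv_of_real algebra_simps)
  then have "closed_segment z ?g \<subseteq> closed_segment z a" by (intro closed_segment_subset) auto
  moreover have "a \<notin> closed_segment z ?g"
  proof
    assume "a \<in> closed_segment z ?g"
    then have "dist a z \<le> t * norm (a - z)"
      using dist_in_closed_segment[of a z ?g] assms by (simp add: dist_norm norm_mult)
    then show False using assms by (simp add: dist_norm)
  qed
  ultimately show ?thesis by blast
qed

lemma norm_sub_limit_le_segment:
  fixes f f' :: "complex \<Rightarrow> complex"
  assumes "z \<noteq> a"
    and deriv: "\<And>u. u \<in> closed_segment z a - {a} \<Longrightarrow> (f has_field_derivative f' u) (at u)"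
    and bound: "\<And>u. u \<in> closed_segment z a - {a} \<Longrightarrow> norm (f' u) \<le> B"
    and lim: "(f \<longlongrightarrow> \<Lambda>) (at a within closed_segment z a - {a})"
  shows "norm (f z - \<Lambda>) \<le> B * norm (z - a)"
proof -
  define g where "g t = z + of_real t * (a - z)" for t :: real
  have sub: "closed_segment z (g t) \<subseteq> closed_segment z a - {a}" if "0 \<le> t" "t < 1" for t
    unfolding g_def using \<open>z \<noteq> a\<close> that by (rule closed_segment_shrink_subset)
  have "0 \<le> B" using bound[of z] \<open>z \<noteq> a\<close> by (meson DiffI ends_in_segment(1) norm_ge_zero order.trans singletonD)
  have near: "norm (f z - f (g t)) \<le> B * norm (z - a)" if t: "0 \<le> t" "t < 1" for t
  proof -
    have "norm (f z - f (g t)) \<le> B * norm (z - g t)"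
      using sub[OF t] deriv bound
      by (intro field_differentiable_bound[where S = "closed_segment z (g t)" and f' = f'])
         (auto intro: has_field_derivative_at_within)
    also have "\<dots> \<le> B * norm (z - a)"
      using t \<open>0 \<le> B\<close>
      by (intro mult_left_mono) (auto simp: g_def norm_mult norm_minus_commute mult_left_le_one_le)
    finally show ?thesis .
  qed
  have "filterlim g (at a within closed_segment z a - {a}) (at_left 1)"
  proof (rule filterlim_at_withinI)
    have "(g \<longlongrightarrow> g 1) (at_left 1)" unfolding g_def by (intro tendsto_intros)
    then show "filterlim g (nhds a) (at_left 1)" by (simp add: g_def)
    show "eventually (\<lambda>t. g t \<in> closed_segment z a - {a} - {a}) (at_left 1)"
    proof (rule eventually_mono[OF eventually_at_left_real[OF zero_less_one]])
      fix t :: real assume "t \<in> {0<..<1}"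
      then show "g t \<in> closed_segment z a - {a} - {a}" using sub[of t] ends_in_segment(2)[of z "g t"] by auto
    qed
  qed
  then have "((\<lambda>t. norm (f z - f (g t))) \<longlongrightarrow> norm (f z - \<Lambda>)) (at_left 1)"
    by (intro tendsto_intros filterlim_compose[OF lim])
  moreover have "eventually (\<lambda>t. norm (f z - f (g t)) \<le> B * norm (z - a)) (at_left 1)"
    using eventually_at_left_real[OF zero_less_one] by eventually_elim (simp add: near)
  ultimately show ?thesis by (rule tendsto_upperbound) simp
qed

section \<open>Holomorphic self-maps of the disk\<close>

locale disk_self_map =
  fixes b :: "complex \<Rightarrow> complex"
  assumes holomorphic: "b holomorphic_on disk"
    and maps_disk: "\<And>z. z \<in> disk \<Longrightarrow> b z \<in> disk"
begin

lemma norm_less_one: "z \<in> disk \<Longrightarrow> norm (b z) < 1"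
  using maps_disk by simp

lemma kb_diag_pos: "z \<in> disk \<Longrightarrow> 0 < (1 - (norm (b z))\<^sup>2) / (1 - (norm z)\<^sup>2)"
  using norm_less_one[of z] by (intro divide_pos_pos) (auto simp: abs_square_less_1)

(* For the combinations A and B of Szego kernels below, the reproducing property turns Q0 and Q1
   into the integrals of |A|^2 and |B|^2 over the circle of radius r, and Q1 also into the integral
   of b B conj A; as |b| <= 1, this gives Q1 <= (Q1 + Q0) / 2. *)
lemma kb_szego_psd:
  fixes n :: nat
  assumes "0 \<le> r" "r < 1" and p: "\<forall>i<n. norm (p i) < r"
  shows "0 \<le> Re (\<Sum>i<n. \<Sum>j<n. v i * cnj (v j) * ((1 - cnj (b (p i)) * b (p j)) * szego_kernel r (p i) (p j)))"
proof -
  define \<gamma> where "\<gamma> = circlepath 0 r"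
  define A where "A u = (\<Sum>i<n. v i * szego_kernel r (p i) u)" for u
  define B where "B u = (\<Sum>i<n. (v i * cnj (b (p i))) * szego_kernel r (p i) u)" for u
  define Q0 where "Q0 = (\<Sum>j<n. cnj (v j) * A (p j))"
  define Q1 where "Q1 = (\<Sum>j<n. cnj (v j) * (b (p j) * B (p j)))"
  have disk: "cball 0 r \<subseteq> disk" using \<open>r < 1\<close> by auto
  have hol: "A holomorphic_on cball 0 r" "B holomorphic_on cball 0 r" "(\<lambda>u. b u * B u) holomorphic_on cball 0 r"
    unfolding A_def[abs_def] B_def[abs_def]
    using p szego_kernel_holomorphic holomorphic_on_subset[OF holomorphic disk]
    by (auto intro!: holomorphic_intros)
  have AA: "((\<lambda>t. A (\<gamma> t) * cnj (A (\<gamma> t))) has_integral Q0) {0..1}"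
    using szego_kernel_reproducing[OF hol(1) p, of v] unfolding \<gamma>_def Q0_def A_def .
  have BB: "((\<lambda>t. B (\<gamma> t) * cnj (B (\<gamma> t))) has_integral Q1) {0..1}"
    using szego_kernel_reproducing[OF hol(2) p, of "\<lambda>i. v i * cnj (b (p i))"]
    unfolding \<gamma>_def Q1_def B_def by (simp add: mult_ac)
  have bBA: "((\<lambda>t. b (\<gamma> t) * B (\<gamma> t) * cnj (A (\<gamma> t))) has_integral Q1) {0..1}"
    using szego_kernel_reproducing[OF hol(3) p, of v] unfolding \<gamma>_def Q1_def A_def .
  have "Re Q1 \<le> (Re Q1 + Re Q0) / 2"
  proof (rule has_integral_le[OF has_integral_Re[OF bBA]])
    show "((\<lambda>t. (Re (B (\<gamma> t) * cnj (B (\<gamma> t))) + Re (A (\<gamma> t) * cnj (A (\<gamma> t)))) / 2)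
        has_integral (Re Q1 + Re Q0) / 2) {0..1}"
      by (intro has_integral_divide has_integral_add has_integral_Re AA BB)
    show "Re (b (\<gamma> t) * B (\<gamma> t) * cnj (A (\<gamma> t)))
        \<le> (Re (B (\<gamma> t) * cnj (B (\<gamma> t))) + Re (A (\<gamma> t) * cnj (A (\<gamma> t)))) / 2" for t
      using norm_less_one[of "\<gamma> t"] assms norm_circlepath_0[of r t]
      by (intro Re_mult_cnj_le_half_sum) (auto simp: \<gamma>_def)
  qed
  moreover have "(\<Sum>i<n. \<Sum>j<n. v i * cnj (v j) * ((1 - cnj (b (p i)) * b (p j)) * szego_kernel r (p i) (p j)))
      = Q0 - Q1"
    unfolding Q0_def Q1_def A_def B_def
    by (subst sum.swap) (simp add: sum_distrib_left sum_subtractf right_diff_distrib left_diff_distrib mult_ac)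
  ultimately show ?thesis by simp
qed

lemma kb_psd:
  fixes n :: nat
  assumes p: "\<forall>i<n. p i \<in> disk"
  shows "0 \<le> Re (\<Sum>i<n. \<Sum>j<n. v i * cnj (v j) * kb b (p i) (p j))"
proof -
  define \<rho> where "\<rho> = Max (insert 0 ((\<lambda>i. norm (p i)) ` {..<n}))"
  have \<rho>: "0 \<le> \<rho>" "\<rho> < 1" "\<And>i. i < n \<Longrightarrow> norm (p i) \<le> \<rho>"
    unfolding \<rho>_def using p by auto
  define F where "F r = (\<Sum>i<n. \<Sum>j<n. v i * cnj (v j) * ((1 - cnj (b (p i)) * b (p j)) * szego_kernel r (p i) (p j)))" for r
  have "eventually (\<lambda>r. \<rho> < r \<and> r < 1) (at_left (1::real))"
    using eventually_at_left_real[OF \<rho>(2)] by (rule eventually_mono) auto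
  then have pos: "eventually (\<lambda>r. 0 \<le> Re (F r)) (at_left 1)"
  proof (rule eventually_mono)
    fix r assume "\<rho> < r \<and> r < 1"
    then show "0 \<le> Re (F r)" unfolding F_def by (intro kb_szego_psd) (use \<rho> in force)+
  qed
  have "1 - cnj (p i) * p j \<noteq> 0" if "i < n" "j < n" for i j
    using p that by (intro one_minus_cnj_mult_neq_zero) auto
  then have "((\<lambda>r. Re (F r)) \<longlongrightarrow> Re (\<Sum>i<n. \<Sum>j<n. v i * cnj (v j) * kb b (p i) (p j))) (at_left 1)"
    unfolding F_def szego_kernel_def kb_def by (auto intro!: tendsto_eq_intros)
  then show ?thesis by (rule tendsto_lowerbound[OF _ pos]) simp
qed

lemma kb_psd_add_point:
  fixes n :: nat
  assumes zs: "\<forall>i<n. zs i \<in> disk" and \<zeta>: "\<zeta> \<in> disk"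
  shows "0 \<le> Re (\<Sum>i<n. \<Sum>j<n. c i * cnj (c j) * kb b (zs i) (zs j))
            + 2 * Re (cnj t * kernel_comb b n c zs \<zeta>) + (norm t)\<^sup>2 * Re (kb b \<zeta> \<zeta>)"
proof -
  define p where "p i = (if i < n then zs i else \<zeta>)" for i
  define v where "v i = (if i < n then c i else t)" for i
  have "0 \<le> Re (\<Sum>i<Suc n. \<Sum>j<Suc n. v i * cnj (v j) * kb b (p i) (p j))"
    by (rule kb_psd) (use zs \<zeta> in \<open>auto simp: p_def\<close>)
  also have "(\<Sum>i<Suc n. \<Sum>j<Suc n. v i * cnj (v j) * kb b (p i) (p j)) =
     (\<Sum>i<n. \<Sum>j<n. v i * cnj (v j) * kb b (p i) (p j)) + (\<Sum>i<n. v i * cnj (v n) * kb b (p i) (p n))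
     + (\<Sum>j<n. v n * cnj (v j) * kb b (p n) (p j)) + v n * cnj (v n) * kb b (p n) (p n)"
    by (simp add: sum.distrib)
  also have "(\<Sum>i<n. \<Sum>j<n. v i * cnj (v j) * kb b (p i) (p j)) = (\<Sum>i<n. \<Sum>j<n. c i * cnj (c j) * kb b (zs i) (zs j))"
    by (intro sum.cong refl) (simp add: v_def p_def)
  also have "(\<Sum>i<n. v i * cnj (v n) * kb b (p i) (p n)) = cnj t * kernel_comb b n c zs \<zeta>"
    by (simp add: kernel_comb_def sum_distrib_left v_def p_def mult_ac)
  also have "(\<Sum>j<n. v n * cnj (v j) * kb b (p n) (p j)) = cnj (cnj t * kernel_comb b n c zs \<zeta>)"
    by (simp add: kernel_comb_def sum_distrib_left v_def p_def mult_ac kb_commute[of b \<zeta>])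
  also have "v n * cnj (v n) * kb b (p n) (p n) = t * cnj t * kb b \<zeta> \<zeta>" by (simp add: v_def p_def)
  finally show ?thesis
    by (simp add: cmod_power2 algebra_simps) (simp add: power2_eq_square algebra_simps)
qed

lemma norm_kernel_comb_sq_le:
  assumes comb: "unit_kernel_comb b n c zs" and \<zeta>: "\<zeta> \<in> disk"
  shows "(norm (kernel_comb b n c zs \<zeta>))\<^sup>2 \<le> (1 - (norm (b \<zeta>))\<^sup>2) / (1 - (norm \<zeta>)\<^sup>2)"
proof -
  define H where "H = kernel_comb b n c zs \<zeta>"
  define K where "K = (1 - (norm (b \<zeta>))\<^sup>2) / (1 - (norm \<zeta>)\<^sup>2)"
  have K: "0 < K" "Re (kb b \<zeta> \<zeta>) = K" unfolding K_def using kb_diag_pos[OF \<zeta>] by (auto simp: kb_diag)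
  have zs: "\<forall>i<n. zs i \<in> disk" and le1: "Re (\<Sum>i<n. \<Sum>j<n. c i * cnj (c j) * kb b (zs i) (zs j)) \<le> 1"
    using comb unfolding unit_kernel_comb_def by auto
  \<comment> \<open>Cauchy--Schwarz: add the point \<open>\<zeta>\<close> to the combination with the optimal weight\<close>
  define t where "t = - H / of_real K"
  have "0 \<le> Re (\<Sum>i<n. \<Sum>j<n. c i * cnj (c j) * kb b (zs i) (zs j)) + 2 * Re (cnj t * H) + (norm t)\<^sup>2 * Re (kb b \<zeta> \<zeta>)"
    unfolding H_def by (rule kb_psd_add_point[OF zs \<zeta>])
  also have "2 * Re (cnj t * H) = - 2 * (norm H)\<^sup>2 / K"
    unfolding t_def by (simp add: complex_mult_cnj cmod_power2 mult.commute[of "cnj H"] divide_simps)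
  also have "(norm t)\<^sup>2 * Re (kb b \<zeta> \<zeta>) = (norm H)\<^sup>2 / K"
    unfolding t_def K using K by (simp add: norm_divide power2_eq_square)
  finally have "(norm H)\<^sup>2 / K \<le> 1" using le1 by simp
  then show ?thesis using K unfolding H_def[symmetric] K_def[symmetric] by (simp add: divide_le_eq)
qed

lemma norm_kernel_comb_le:
  assumes comb: "unit_kernel_comb b n c zs" and "norm \<zeta> \<le> s" "s < 1"
  shows "norm (kernel_comb b n c zs \<zeta>) \<le> sqrt (1 / (1 - s\<^sup>2))"
proof -
  have \<zeta>: "\<zeta> \<in> disk" using assms by simp
  have "0 \<le> s" using assms(2) norm_ge_zero[of \<zeta>] by linarith
  have "(norm (kernel_comb b n c zs \<zeta>))\<^sup>2 \<le> (1 - (norm (b \<zeta>))\<^sup>2) / (1 - (norm \<zeta>)\<^sup>2)"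
    by (rule norm_kernel_comb_sq_le[OF comb \<zeta>])
  also have "\<dots> \<le> 1 / (1 - (norm \<zeta>)\<^sup>2)"
    using \<zeta> by (intro divide_right_mono) (auto simp: abs_square_less_1 less_imp_le)
  also have "\<dots> \<le> 1 / (1 - s\<^sup>2)"
    using assms \<zeta> \<open>0 \<le> s\<close> by (intro divide_left_mono mult_pos_pos) (auto simp: power_mono abs_square_less_1)
  finally show ?thesis by (simp add: real_le_rsqrt)
qed

lemma hb_norm_ge_point_eval:
  assumes w: "w \<in> disk"
  shows "ennreal (norm (f w) / sqrt ((1 - (norm (b w))\<^sup>2) / (1 - (norm w)\<^sup>2))) \<le> hb_norm b f"
proof -
  define K where "K = (1 - (norm (b w))\<^sup>2) / (1 - (norm w)\<^sup>2)"
  have K: "0 < K" "kb b w w = of_real K" unfolding K_def using kb_diag_pos[OF w] by (auto simp: kb_diag)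
  define c where "c = (\<lambda>_::nat. complex_of_real (1 / sqrt K))"
  have "unit_kernel_comb b 1 c (\<lambda>_. w)"
    unfolding unit_kernel_comb_def c_def using w K by (simp flip: of_real_mult)
  from hb_norm_ge_kernel_pairing[OF this, of f] show ?thesis
    unfolding kernel_pairing_def c_def K_def[symmetric] using K by (simp add: norm_mult norm_divide)
qed

lemma tendsto_of_hb_norm_tendsto:
  assumes lim: "((\<lambda>z. hb_norm b (\<lambda>w. F z w - G w)) \<longlongrightarrow> 0) L" and w: "w \<in> disk"
  shows "((\<lambda>z. F z w) \<longlongrightarrow> G w) L"
proof -
  define s where "s = sqrt ((1 - (norm (b w))\<^sup>2) / (1 - (norm w)\<^sup>2))"
  have s: "0 < s" unfolding s_def using kb_diag_pos[OF w] by simp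
  have le: "ennreal (norm (F z w - G w)) \<le> ennreal s * hb_norm b (\<lambda>w. F z w - G w)" for z
  proof -
    have "ennreal (norm (F z w - G w)) = ennreal s * ennreal (norm (F z w - G w) / s)"
      using s by (simp flip: ennreal_mult)
    also have "\<dots> \<le> ennreal s * hb_norm b (\<lambda>w. F z w - G w)"
      using hb_norm_ge_point_eval[OF w, of "\<lambda>w. F z w - G w"] unfolding s_def by (intro mult_left_mono) auto
    finally show ?thesis .
  qed
  have "((\<lambda>z. ennreal s * hb_norm b (\<lambda>w. F z w - G w)) \<longlongrightarrow> 0) L"
    using ennreal_tendsto_cmult[OF _ lim, of "ennreal s"] by simp
  then have "((\<lambda>z. ennreal (norm (F z w - G w))) \<longlongrightarrow> 0) L"
    using tendsto_sandwich[of "\<lambda>_. 0" "\<lambda>z. ennreal (norm (F z w - G w))" L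
        "\<lambda>z. ennreal s * hb_norm b (\<lambda>w. F z w - G w)" 0] le by simp
  then have "((\<lambda>z. norm (F z w - G w)) \<longlongrightarrow> 0) L"
    using tendsto_ennreal_iff[of "\<lambda>z. norm (F z w - G w)" L 0] by simp
  then show ?thesis by (simp add: tendsto_norm_zero_iff LIM_zero_iff)
qed

lemma kb_holomorphic: "w \<in> disk \<Longrightarrow> kb b w holomorphic_on disk"
  unfolding kb_def[abs_def] using one_minus_cnj_mult_neq_zero[of w]
  by (intro holomorphic_intros holomorphic) (auto simp: less_imp_le)

lemma higher_deriv_kb:
  assumes w: "w \<in> disk" and z: "z \<in> disk"
  shows "(deriv ^^ j) (kb b w) z = recip_linear_deriv (cnj w) j z - cnj (b w) *
           (\<Sum>k = 0..j. of_nat (j choose k) * recip_linear_deriv (cnj w) k z * (deriv ^^ (j - k)) b z)"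
proof -
  define e where "e \<zeta> = 1 / (1 - cnj w * \<zeta>)" for \<zeta>
  have nz: "1 - cnj w * \<zeta> \<noteq> 0" if "\<zeta> \<in> disk" for \<zeta>
    using w that by (intro one_minus_cnj_mult_neq_zero) auto
  have e_hol: "e holomorphic_on disk" unfolding e_def[abs_def] using nz by (intro holomorphic_intros) auto
  have e_deriv: "(deriv ^^ k) e z = recip_linear_deriv (cnj w) k z" for k
    unfolding e_def[abs_def] by (rule higher_deriv_recip_linear[OF nz[OF z]])
  have "kb b w = (\<lambda>\<zeta>. e \<zeta> - cnj (b w) * (e \<zeta> * b \<zeta>))"
    unfolding kb_def e_def by (simp add: fun_eq_iff diff_divide_distrib)
  then have "(deriv ^^ j) (kb b w) z = (deriv ^^ j) e z - (deriv ^^ j) (\<lambda>\<zeta>. cnj (b w) * (e \<zeta> * b \<zeta>)) z"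
    using e_hol holomorphic z by (simp add: higher_deriv_diff holomorphic_intros)
  also have "(deriv ^^ j) (\<lambda>\<zeta>. cnj (b w) * (e \<zeta> * b \<zeta>)) z = cnj (b w) * (deriv ^^ j) (\<lambda>\<zeta>. e \<zeta> * b \<zeta>) z"
    by (rule higher_deriv_cmult[where A = disk]) (use e_hol holomorphic z in \<open>auto intro!: holomorphic_intros\<close>)
  also have "(deriv ^^ j) (\<lambda>\<zeta>. e \<zeta> * b \<zeta>) z
      = (\<Sum>k = 0..j. of_nat (j choose k) * (deriv ^^ k) e z * (deriv ^^ (j - k)) b z)"
    by (rule higher_deriv_mult[OF e_hol holomorphic _ z]) auto
  finally show ?thesis by (simp add: e_deriv)
qed

lemma kernel_comb_holomorphic: "\<forall>i<n. zs i \<in> disk \<Longrightarrow> kernel_comb b n c zs holomorphic_on disk"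
  unfolding kernel_comb_def[abs_def] using kb_holomorphic by (intro holomorphic_intros) auto

lemma higher_deriv_kernel_comb:
  assumes "\<forall>i<n. zs i \<in> disk" "z \<in> disk"
  shows "(deriv ^^ j) (kernel_comb b n c zs) z = (\<Sum>i<n. c i * (deriv ^^ j) (kb b (zs i)) z)"
proof -
  have "(deriv ^^ j) (kernel_comb b n c zs) z = (\<Sum>i<n. (deriv ^^ j) (\<lambda>\<zeta>. c i * kb b (zs i) \<zeta>) z)"
    unfolding kernel_comb_def[abs_def] using assms kb_holomorphic
    by (intro higher_deriv_sum[where S = disk]) (auto intro!: holomorphic_intros)
  also have "\<dots> = (\<Sum>i<n. c i * (deriv ^^ j) (kb b (zs i)) z)"
    using assms kb_holomorphic by (intro sum.cong refl higher_deriv_cmult[where A = disk]) auto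
  finally show ?thesis .
qed

lemma kernel_pairing_dk:
  assumes "\<forall>i<n. zs i \<in> disk" "z \<in> disk"
  shows "kernel_pairing n c zs (dk b j z) = cnj ((deriv ^^ j) (kernel_comb b n c zs) z)"
  unfolding higher_deriv_kernel_comb[OF assms] kernel_pairing_def dk_eq_cnj_higher_deriv_kb by simp

lemma hb_norm_dk_finite:
  assumes z0: "z0 \<in> disk"
  shows "hb_norm b (dk b j z0) < \<infinity>"
proof -
  define \<rho> where "\<rho> = (1 - norm z0) / 2"
  define s where "s = (1 + norm z0) / 2"
  define M where "M = sqrt (1 / (1 - s\<^sup>2))"
  have \<rho>: "0 < \<rho>" and s: "0 \<le> s" "s < 1" unfolding \<rho>_def s_def using z0 by auto
  have M: "0 \<le> M" unfolding M_def using s by (simp add: power_le_one)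
  have ball: "norm u \<le> s" if "u \<in> cball z0 \<rho>" for u
    using that norm_triangle_sub[of u z0] by (simp add: dist_norm norm_minus_commute \<rho>_def s_def)
  then have cball_disk: "cball z0 \<rho> \<subseteq> disk" using s(2) by fastforce
  have "hb_norm b (dk b j z0) \<le> ennreal (fact j * (M + 1) / \<rho> ^ j + M)"
  proof (rule hb_norm_le_ennrealI)
    fix n c zs assume comb: "unit_kernel_comb b n c zs"
    define H where "H = kernel_comb b n c zs"
    have zs: "\<forall>i<n. zs i \<in> disk" using comb unfolding unit_kernel_comb_def by auto
    have H_hol: "H holomorphic_on cball z0 \<rho>"
      unfolding H_def by (rule holomorphic_on_subset[OF kernel_comb_holomorphic[OF zs] cball_disk])
    have H_le: "norm (H u) \<le> M" if "u \<in> cball z0 \<rho>" for u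
      unfolding H_def M_def by (rule norm_kernel_comb_le[OF comb ball[OF that] s(2)])
    have "norm ((deriv ^^ j) H z0) \<le> fact j * (M + 1) / \<rho> ^ j + M"
    proof (cases "j = 0")
      case True
      then show ?thesis using H_le[of z0] \<rho> M by simp
    next
      case False
      have "norm ((deriv ^^ j) H z0) \<le> fact j * (M + 1) / \<rho> ^ j"
      proof (rule Cauchy_higher_deriv_bound[where y = 0])
        show "H holomorphic_on ball z0 \<rho>" using H_hol by (rule holomorphic_on_subset) auto
        show "continuous_on (cball z0 \<rho>) H" using H_hol by (rule holomorphic_on_imp_continuous_on)
        show "H w \<in> ball 0 (M + 1)" if "w \<in> ball z0 \<rho>" for w
          using H_le[of w] that by simp
      qed (use \<rho> False in auto)
      then show ?thesis using M by simp
    qed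
    then show "norm (kernel_pairing n c zs (dk b j z0)) \<le> fact j * (M + 1) / \<rho> ^ j + M"
      unfolding kernel_pairing_dk[OF zs z0] H_def by simp
  qed
  then show ?thesis using order.strict_trans1 by fastforce
qed

lemma finite_nonvanishing_subset:
  assumes "\<exists>z\<in>disk. b z \<noteq> 0"
  obtains W where "finite W" "card W = n" "W \<subseteq> {w \<in> disk. b w \<noteq> 0}"
proof -
  obtain z0 where z0: "z0 \<in> disk" "b z0 \<noteq> 0" using assms by blast
  have "open (disk \<inter> b -` (- {0}))"
    using holomorphic_on_imp_continuous_on[OF holomorphic] by (intro continuous_open_preimage) auto
  then have "infinite (disk \<inter> b -` (- {0}))"
    using z0 islimpt_eq_acc_point[of z0 UNIV] islimpt_UNIV by auto
  then obtain W where "W \<subseteq> disk \<inter> b -` (- {0})" "finite W" "card W = n"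
    using infinite_arbitrarily_large by blast
  then show ?thesis using that by blast
qed

lemma poly_kb_interpolant:
  assumes w: "w \<in> disk" and z: "z \<in> disk"
  shows "(recip_linear_deriv (cnj w) m z - (deriv ^^ m) (kb b w) z) * (1 - cnj w * z) ^ Suc m
     = cnj (b w) * poly (kb_interpolant b m z) (cnj w)"
proof -
  have nz: "1 - cnj w * z \<noteq> 0" using w z by (intro one_minus_cnj_mult_neq_zero) auto
  have factor: "recip_linear_deriv (cnj w) k z * (1 - cnj w * z) ^ Suc m = fact k * (cnj w ^ k * (1 - z * cnj w) ^ (m - k))"
    if "k \<le> m" for k
  proof -
    have "(1 - cnj w * z) ^ Suc m = (1 - cnj w * z) ^ Suc k * (1 - cnj w * z) ^ (m - k)"
      using that by (simp flip: power_add)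
    then show ?thesis unfolding recip_linear_deriv_def using nz by (simp add: mult.commute)
  qed
  have "(recip_linear_deriv (cnj w) m z - (deriv ^^ m) (kb b w) z) * (1 - cnj w * z) ^ Suc m
      = cnj (b w) * (\<Sum>k\<le>m. of_nat (m choose k) * (recip_linear_deriv (cnj w) k z * (1 - cnj w * z) ^ Suc m) * (deriv ^^ (m - k)) b z)"
    unfolding higher_deriv_kb[OF w z] atLeast0AtMost by (simp add: sum_distrib_left sum_distrib_right mult_ac)
  also have "\<dots> = cnj (b w) * (\<Sum>k\<le>m. of_nat (m choose k) * (fact k * (cnj w ^ k * (1 - z * cnj w) ^ (m - k))) * (deriv ^^ (m - k)) b z)"
    by (intro arg_cong[where f = "(*) _"] sum.cong refl) (simp only: factor atMost_iff)
  also have "\<dots> = cnj (b w) * poly (kb_interpolant b m z) (cnj w)"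
    by (simp add: kb_interpolant_def poly_sum poly_monom mult_ac)
  finally show ?thesis .
qed

lemma tendsto_poly_kb_interpolant:
  assumes w: "w \<in> disk" "b w \<noteq> 0" and ev: "eventually (\<lambda>z. z \<in> disk) F"
    and lim1: "((\<lambda>z. z) \<longlongrightarrow> 1) F" and L: "((\<lambda>z. dk b m z w) \<longlongrightarrow> L) F"
  shows "((\<lambda>z. poly (kb_interpolant b m z) (cnj w))
           \<longlongrightarrow> (recip_linear_deriv (cnj w) m 1 - cnj L) * (1 - cnj w * 1) ^ Suc m / cnj (b w)) F"
proof -
  have "1 - cnj w * 1 \<noteq> 0" using w by (intro one_minus_cnj_mult_neq_zero) auto
  then have "((\<lambda>z. (recip_linear_deriv (cnj w) m z - cnj (dk b m z w)) * (1 - cnj w * z) ^ Suc m / cnj (b w))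
      \<longlongrightarrow> (recip_linear_deriv (cnj w) m 1 - cnj L) * (1 - cnj w * 1) ^ Suc m / cnj (b w)) F"
    unfolding recip_linear_deriv_def using w(2) by (intro tendsto_intros L lim1) auto
  moreover have "eventually (\<lambda>z. (recip_linear_deriv (cnj w) m z - cnj (dk b m z w)) * (1 - cnj w * z) ^ Suc m / cnj (b w)
      = poly (kb_interpolant b m z) (cnj w)) F"
    using ev
  proof eventually_elim
    case (elim z)
    have "(recip_linear_deriv (cnj w) m z - cnj (dk b m z w)) * (1 - cnj w * z) ^ Suc m
        = cnj (b w) * poly (kb_interpolant b m z) (cnj w)"
      unfolding dk_eq_cnj_higher_deriv_kb complex_cnj_cnj by (rule poly_kb_interpolant[OF w(1) elim])
    then show ?case using w(2) by simp
  qed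
  ultimately show ?thesis by (rule Lim_transform_eventually)
qed

(* The polynomials kb_interpolant b m z converge at the m+1 nodes cnj w, w in W, hence
   coefficientwise, and their coefficients determine the derivatives of b by a unitriangular
   system. *)
lemma higher_deriv_tendsto_of_dk_tendsto:
  fixes F :: "complex filter"
  assumes nonzero: "\<exists>z\<in>disk. b z \<noteq> 0" and ev: "eventually (\<lambda>z. z \<in> disk) F"
    and lim1: "((\<lambda>z. z) \<longlongrightarrow> 1) F"
    and dk_lim: "\<And>w. w \<in> disk \<Longrightarrow> \<exists>L. ((\<lambda>z. dk b m z w) \<longlongrightarrow> L) F"
    and "i \<le> m"
  shows "\<exists>L. ((\<lambda>z. (deriv ^^ i) b z) \<longlongrightarrow> L) F"
proof -
  obtain W where W: "finite W" "card W = Suc m" "W \<subseteq> {w \<in> disk. b w \<noteq> 0}"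
    using finite_nonvanishing_subset[OF nonzero] .
  have "card (cnj ` W) = Suc m" using W by (simp add: card_image inj_on_def)
  then have deg: "degree (kb_interpolant b m z) < card (cnj ` W)" for z
    using degree_kb_interpolant[of b m z] by simp
  have "\<forall>x\<in>cnj ` W. \<exists>V. ((\<lambda>z. poly (kb_interpolant b m z) x) \<longlongrightarrow> V) F"
  proof
    fix x assume "x \<in> cnj ` W"
    then obtain w where w: "x = cnj w" "w \<in> disk" "b w \<noteq> 0" using W by auto
    obtain L where "((\<lambda>z. dk b m z w) \<longlongrightarrow> L) F" using dk_lim w(2) by blast
    from tendsto_poly_kb_interpolant[OF w(2,3) ev lim1 this]
    show "\<exists>V. ((\<lambda>z. poly (kb_interpolant b m z) x) \<longlongrightarrow> V) F" unfolding w(1) ..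
  qed
  then obtain V where "\<forall>x\<in>cnj ` W. ((\<lambda>z. poly (kb_interpolant b m z) x) \<longlongrightarrow> V x) F"
    by (rule bchoice[THEN exE])
  then have "((\<lambda>z. coeff (kb_interpolant b m z) l)
      \<longlongrightarrow> (\<Sum>x\<in>cnj ` W. V x * coeff (lagrange_basis (cnj ` W) x) l)) F" for l
    using W(1) by (intro tendsto_coeff_of_tendsto_poly deg) auto
  then have coeff_lim: "\<exists>L. ((\<lambda>z. coeff (kb_interpolant b m z) l) \<longlongrightarrow> L) F" for l
    by blast
  define e where "e k z = of_nat (m choose k) * fact k * (deriv ^^ (m - k)) b z" for k z
  have "\<exists>L. ((\<lambda>z. e (m - i) z) \<longlongrightarrow> L) F"
  proof (rule unitriangular_tendsto[where c = "\<lambda>l z. coeff (kb_interpolant b m z) l"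
        and \<omega> = "\<lambda>k l z. of_nat ((m - k) choose (l - k)) * (- z) ^ (l - k)"])
    show "\<exists>L. ((\<lambda>z. of_nat ((m - k) choose (l - k)) * (- z) ^ (l - k)) \<longlongrightarrow> L) F" for k l
      using lim1 by (intro exI[of _ "of_nat ((m - k) choose (l - k)) * (- 1) ^ (l - k)"] tendsto_intros)
    show "coeff (kb_interpolant b m z) l = e l z + (\<Sum>k<l. e k z * (of_nat ((m - k) choose (l - k)) * (- z) ^ (l - k)))"
      if "l \<le> m" for l z
      unfolding kb_interpolant_def e_def using coeff_sum_monom_mult_linear_power[OF that] .
  qed (simp_all add: coeff_lim)
  then obtain L where "((\<lambda>z. e (m - i) z) \<longlongrightarrow> L) F" by blast
  then have "((\<lambda>z. e (m - i) z / (of_nat (m choose (m - i)) * fact (m - i)))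
      \<longlongrightarrow> L / (of_nat (m choose (m - i)) * fact (m - i))) F"
    by (intro tendsto_divide tendsto_const) auto
  moreover have "e (m - i) z / (of_nat (m choose (m - i)) * fact (m - i)) = (deriv ^^ i) b z" for z
    unfolding e_def using \<open>i \<le> m\<close> by simp
  ultimately have "((\<lambda>z. (deriv ^^ i) b z) \<longlongrightarrow> L / (of_nat (m choose (m - i)) * fact (m - i))) F"
    by simp
  then show ?thesis ..
qed

lemma tendsto_higher_deriv_kernel_comb:
  assumes zs: "\<forall>i<n. zs i \<in> disk" and ev: "eventually (\<lambda>z. z \<in> disk) F"
    and lim: "\<And>w. w \<in> disk \<Longrightarrow> ((\<lambda>z. dk b j z w) \<longlongrightarrow> G w) F"
  shows "((\<lambda>z. (deriv ^^ j) (kernel_comb b n c zs) z) \<longlongrightarrow> cnj (kernel_pairing n c zs G)) F"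
proof -
  have "((\<lambda>z. cnj (kernel_pairing n c zs (dk b j z))) \<longlongrightarrow> cnj (kernel_pairing n c zs G)) F"
    unfolding kernel_pairing_def using zs lim by (intro tendsto_intros) auto
  moreover have "eventually (\<lambda>z. cnj (kernel_pairing n c zs (dk b j z)) = (deriv ^^ j) (kernel_comb b n c zs) z) F"
    using ev by eventually_elim (simp add: kernel_pairing_dk[OF zs])
  ultimately show ?thesis by (rule Lim_transform_eventually)
qed

lemma norm_kernel_pairing_dk_diff_le:
  assumes comb: "unit_kernel_comb b n c zs" and "z \<noteq> 1" and \<Omega>: "\<Omega> \<subseteq> disk"
    and seg: "closed_segment z 1 - {1} \<subseteq> \<Omega>"
    and bound: "\<And>u. u \<in> closed_segment z 1 - {1} \<Longrightarrow> hb_norm b (dk b (Suc j) u) \<le> ennreal B" and "0 \<le> B"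
    and lim: "\<And>w. w \<in> disk \<Longrightarrow> ((\<lambda>z. dk b j z w) \<longlongrightarrow> dk1 b \<Omega> j w) (at 1 within \<Omega>)"
  shows "norm (kernel_pairing n c zs (\<lambda>w. dk b j z w - dk1 b \<Omega> j w)) \<le> B * norm (z - 1)"
proof -
  have zs: "\<forall>i<n. zs i \<in> disk" using comb by (simp add: unit_kernel_comb_def)
  define H where "H = kernel_comb b n c zs"
  define \<Lambda> where "\<Lambda> = kernel_pairing n c zs (dk1 b \<Omega> j)"
  have "norm ((deriv ^^ j) H z - cnj \<Lambda>) \<le> B * norm (z - 1)"
  proof (rule norm_sub_limit_le_segment[OF \<open>z \<noteq> 1\<close>])
    fix u assume u: "u \<in> closed_segment z 1 - {1}"
    then have "u \<in> disk" using seg \<Omega> by auto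
    show "((deriv ^^ j) H has_field_derivative (deriv ^^ Suc j) H u) (at u)"
      unfolding H_def by (rule has_field_derivative_higher_deriv[OF kernel_comb_holomorphic[OF zs] _ \<open>u \<in> disk\<close>]) simp
    have "ennreal (norm (kernel_pairing n c zs (dk b (Suc j) u))) \<le> ennreal B"
      using hb_norm_ge_kernel_pairing[OF comb] bound[OF u] by (rule order.trans)
    then show "norm ((deriv ^^ Suc j) H u) \<le> B"
      using \<open>0 \<le> B\<close> by (simp add: kernel_pairing_dk[OF zs \<open>u \<in> disk\<close>] H_def)
  next
    have "((\<lambda>u. (deriv ^^ j) H u) \<longlongrightarrow> cnj \<Lambda>) (at 1 within \<Omega>)"
      unfolding H_def \<Lambda>_def using eventually_at_within_in_superset[OF \<Omega>]
      by (rule tendsto_higher_deriv_kernel_comb[OF zs _ lim])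
    then show "((deriv ^^ j) H \<longlongrightarrow> cnj \<Lambda>) (at 1 within closed_segment z 1 - {1})"
      by (rule tendsto_within_subset[OF _ seg])
  qed
  moreover have "z \<in> disk" using seg \<Omega> \<open>z \<noteq> 1\<close> by auto
  then have "kernel_pairing n c zs (\<lambda>w. dk b j z w - dk1 b \<Omega> j w) = cnj ((deriv ^^ j) H z - cnj \<Lambda>)"
    by (simp add: kernel_pairing_diff kernel_pairing_dk[OF zs] H_def \<Lambda>_def)
  ultimately show ?thesis by (simp only: complex_mod_cnj)
qed

lemma hb_norm_dk_diff_le:
  assumes region: "approach_region \<Omega>"
    and bound: "eventually (\<lambda>u. hb_norm b (dk b (Suc j) u) \<le> ennreal B) (at 1 within \<Omega>)" and "0 \<le> B"
    and lim: "\<And>w. w \<in> disk \<Longrightarrow> ((\<lambda>z. dk b j z w) \<longlongrightarrow> dk1 b \<Omega> j w) (at 1 within \<Omega>)"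
  shows "eventually (\<lambda>z. hb_norm b (\<lambda>w. dk b j z w - dk1 b \<Omega> j w) \<le> ennreal (B * norm (z - 1))) (at 1 within \<Omega>)"
proof -
  obtain \<delta>0 where \<delta>0: "\<delta>0 > 0" "\<forall>z\<in>\<Omega>. norm (z - 1) < \<delta>0 \<longrightarrow> closed_segment z 1 - {1} \<subseteq> \<Omega>"
    using region unfolding approach_region_def by blast
  obtain \<delta>1 where \<delta>1: "\<delta>1 > 0"
    "\<And>u. u \<in> \<Omega> \<Longrightarrow> u \<noteq> 1 \<Longrightarrow> dist u 1 < \<delta>1 \<Longrightarrow> hb_norm b (dk b (Suc j) u) \<le> ennreal B"
    using bound unfolding eventually_at by blast
  show ?thesis unfolding eventually_at
  proof (intro exI[of _ "min \<delta>0 \<delta>1"] conjI ballI impI)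
    fix z assume z: "z \<in> \<Omega>" "z \<noteq> 1 \<and> dist z 1 < min \<delta>0 \<delta>1"
    have seg: "closed_segment z 1 - {1} \<subseteq> \<Omega>" using \<delta>0(2) z by (simp add: dist_norm)
    have seg_bound: "hb_norm b (dk b (Suc j) u) \<le> ennreal B" if "u \<in> closed_segment z 1 - {1}" for u
      using that seg z dist_in_closed_segment[of u z 1] by (intro \<delta>1(2)) auto
    show "hb_norm b (\<lambda>w. dk b j z w - dk1 b \<Omega> j w) \<le> ennreal (B * norm (z - 1))"
      by (rule hb_norm_le_ennrealI, rule norm_kernel_pairing_dk_diff_le[OF _ _ _ seg seg_bound \<open>0 \<le> B\<close> lim])
         (use z approach_region_subset_disk[OF region] in auto)
  qed (use \<delta>0(1) \<delta>1(1) in simp)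
qed

lemma dk_tendsto_dk1:
  assumes region: "approach_region \<Omega>" and w: "w \<in> disk"
    and derivs: "\<forall>i\<le>j. \<exists>L. ((\<lambda>z. (deriv ^^ i) b z) \<longlongrightarrow> L) (at 1 within \<Omega>)"
  shows "((\<lambda>z. dk b j z w) \<longlongrightarrow> dk1 b \<Omega> j w) (at 1 within \<Omega>)"
proof -
  have "\<forall>i\<in>{..j}. \<exists>L. ((\<lambda>z. (deriv ^^ i) b z) \<longlongrightarrow> L) (at 1 within \<Omega>)" using derivs by simp
  then obtain L where L: "\<forall>i\<in>{..j}. ((\<lambda>z. (deriv ^^ i) b z) \<longlongrightarrow> L i) (at 1 within \<Omega>)"
    by (rule bchoice[THEN exE])
  have ev: "eventually (\<lambda>z. z \<in> disk) (at 1 within \<Omega>)"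
    using approach_region_subset_disk[OF region] by (rule eventually_at_within_in_superset)
  define K where "K = recip_linear_deriv (cnj w) j 1 - cnj (b w) *
    (\<Sum>k = 0..j. of_nat (j choose k) * recip_linear_deriv (cnj w) k 1 * L (j - k))"
  have "1 - cnj w * 1 \<noteq> 0" using w by (intro one_minus_cnj_mult_neq_zero) auto
  then have "((\<lambda>z. recip_linear_deriv (cnj w) j z - cnj (b w) *
        (\<Sum>k = 0..j. of_nat (j choose k) * recip_linear_deriv (cnj w) k z * (deriv ^^ (j - k)) b z))
      \<longlongrightarrow> K) (at 1 within \<Omega>)"
    unfolding K_def recip_linear_deriv_def using L by (intro tendsto_intros) auto
  moreover have "eventually (\<lambda>z. recip_linear_deriv (cnj w) j z - cnj (b w) *
        (\<Sum>k = 0..j. of_nat (j choose k) * recip_linear_deriv (cnj w) k z * (deriv ^^ (j - k)) b z)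
      = (deriv ^^ j) (kb b w) z) (at 1 within \<Omega>)"
    using ev by eventually_elim (simp add: higher_deriv_kb[OF w])
  ultimately have "((\<lambda>z. (deriv ^^ j) (kb b w) z) \<longlongrightarrow> K) (at 1 within \<Omega>)"
    by (rule Lim_transform_eventually)
  then have "((\<lambda>z. dk b j z w) \<longlongrightarrow> cnj K) (at 1 within \<Omega>)"
    unfolding dk_eq_cnj_higher_deriv_kb by (rule tendsto_cnj)
  moreover have "at 1 within \<Omega> \<noteq> bot"
    using approach_region_islimpt[OF region] by (simp add: trivial_limit_within)
  ultimately show ?thesis unfolding dk1_def by (simp add: tendsto_Lim)
qed

lemma hb_norm_dk_tendsto_step:
  assumes region: "approach_region \<Omega>"
    and conv: "((\<lambda>z. hb_norm b (\<lambda>w. dk b (Suc j) z w - dk1 b \<Omega> (Suc j) w)) \<longlongrightarrow> 0) (at 1 within \<Omega>)"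
    and lim: "\<And>w. w \<in> disk \<Longrightarrow> ((\<lambda>z. dk b j z w) \<longlongrightarrow> dk1 b \<Omega> j w) (at 1 within \<Omega>)"
  shows "((\<lambda>z. hb_norm b (\<lambda>w. dk b j z w - dk1 b \<Omega> j w)) \<longlongrightarrow> 0) (at 1 within \<Omega>)"
proof -
  have "at 1 within \<Omega> \<noteq> bot"
    using approach_region_islimpt[OF region] by (simp add: trivial_limit_within)
  moreover have "eventually (\<lambda>z. hb_norm b (dk b (Suc j) z) < \<infinity>) (at 1 within \<Omega>)"
    using eventually_at_within_in_superset[OF approach_region_subset_disk[OF region]]
    by eventually_elim (rule hb_norm_dk_finite)
  ultimately have "\<exists>B\<ge>0. eventually (\<lambda>z. hb_norm b (dk b (Suc j) z) \<le> ennreal B) (at 1 within \<Omega>)"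
    by (rule hb_norm_eventually_bounded[OF _ conv])
  then obtain B where B: "0 \<le> B" "eventually (\<lambda>z. hb_norm b (dk b (Suc j) z) \<le> ennreal B) (at 1 within \<Omega>)"
    by blast
  have "((\<lambda>z. ennreal (B * norm (z - 1))) \<longlongrightarrow> ennreal (B * norm (1 - 1 :: complex))) (at 1 within \<Omega>)"
    by (intro tendsto_intros)
  then have lim0: "((\<lambda>z. ennreal (B * norm (z - 1))) \<longlongrightarrow> 0) (at 1 within \<Omega>)" by simp
  show ?thesis
    by (rule tendsto_sandwich[OF _ hb_norm_dk_diff_le[OF region B(2,1) lim] tendsto_const lim0]) simp
qed

end

theorem mainTheorem9:
  fixes b :: "complex \<Rightarrow> complex" and N :: enat and a :: "nat \<Rightarrow> complex"
    and \<nu> :: "complex measure" and \<Omega> :: "complex set" and m :: nat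
  assumes b_hol: "b holomorphic_on disk"
    and b_self: "\<forall>z\<in>disk. b z \<in> disk"
    and b_nonzero: "\<exists>z\<in>disk. b z \<noteq> 0"
    and zeros: "is_zero_seq b N a"
    and sing: "is_sing_inner_factor b N a \<nu>"
    and region: "approach_region \<Omega>"
    and bound: "(SUP z\<in>\<Omega>.
        (\<Sum>n. if enat n < N then ennreal ((1 - (norm (a n))\<^sup>2) / (norm (1 - cnj (a n) * z)) ^ (2*m+2)) else 0)
      + (\<integral>\<^sup>+\<zeta>. ennreal (1 / (norm (1 - cnj \<zeta> * z)) ^ (2*m+2)) \<partial>\<nu>)
      + (\<integral>\<^sup>+\<zeta>. ennreal (- ln (norm (bdry b \<zeta>)) / (norm (1 - cnj \<zeta> * z)) ^ (2*m+2)) \<partial>circle_meas))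
      < \<infinity>"
    and conv_m: "((\<lambda>z. hb_norm b (\<lambda>w. dk b m z w - dk1 b \<Omega> m w)) \<longlongrightarrow> 0) (at 1 within \<Omega>)"
  shows "\<forall>j<m. ((\<lambda>z. hb_norm b (\<lambda>w. dk b j z w - dk1 b \<Omega> j w)) \<longlongrightarrow> 0) (at 1 within \<Omega>)"
proof -
  interpret disk_self_map b using b_hol b_self by unfold_locales auto
  have dk_lim: "\<exists>L. ((\<lambda>z. dk b m z w) \<longlongrightarrow> L) (at 1 within \<Omega>)" if "w \<in> disk" for w
    using tendsto_of_hb_norm_tendsto[OF conv_m that] ..
  have "\<forall>i\<le>m. \<exists>L. ((\<lambda>z. (deriv ^^ i) b z) \<longlongrightarrow> L) (at 1 within \<Omega>)"
    using higher_deriv_tendsto_of_dk_tendsto[OF b_nonzero eventually_at_within_in_superset[OF approach_region_subset_disk[OF region]]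
        tendsto_ident_at dk_lim] by blast
  then have pointwise: "((\<lambda>z. dk b j z w) \<longlongrightarrow> dk1 b \<Omega> j w) (at 1 within \<Omega>)"
    if "j \<le> m" "w \<in> disk" for j w
    using that by (intro dk_tendsto_dk1[OF region]) auto
  show ?thesis
  proof (intro allI impI)
    fix j assume "j < m"
    then have "j \<le> m" by simp
    then show "((\<lambda>z. hb_norm b (\<lambda>w. dk b j z w - dk1 b \<Omega> j w)) \<longlongrightarrow> 0) (at 1 within \<Omega>)"
    proof (induction j rule: inc_induct)
      case base
      show ?case by (rule conv_m)
    next
      case (step n)
      then show ?case using hb_norm_dk_tendsto_step[OF region] pointwise by simp
    qed
  qed
qed

end
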